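(* An instance $(G,\ell)$ of \textsc{Geometric Thickness} with $n=|V(G)|$ and $m=|E(G)|$ can be expressed as a sentence of the existential theory of the reals in $2n+m$ variables, using polynomials of total degree at most $6$ and $O(n^4)$ polynomial (in)equalities, such that the sentence is true if and only if $(G,\ell)$ is a yes-instance.
   Context: A straight-line drawing maps vertices to distinct points of $\mathbb{R}^2$, edges being straight segments; a geometric $\ell$-layer drawing of $G$ is a straight-line drawing with an edge coloring $\chi:E(G)\to[\ell]$ such that no two same-colored edges cross. \textsc{Geometric Thickness}: given $(G,\ell)$, decide whether $G$ admits a geometric $\ell$-layer drawing. A sentence of the existential theory of the reals has the form $\exists x_1,\dots,x_N\in\mathbb{R}:\varphi$, where $\varphi$ is a quantifier-free Boolean combination of atoms $p\ \sigma\ q$ with $p,q$ real polynomials in $x_1,\dots,x_N$ with integer coefficients and $\sigma\in\{<,\le,=,\ge,>\}$. *)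

theory Defs
  imports "HOL-Analysis.Analysis"
begin

text \<open>A polynomial with integer coefficients in the variables x_0, x_1, ... is given
  as a list of monomials (c, vs): coefficient c times the product of the variables
  whose indices are listed in vs (with repetition).\<close>

type_synonym mpoly = "(int \<times> nat list) list"

definition mpoly_eval :: "(nat \<Rightarrow> real) \<Rightarrow> mpoly \<Rightarrow> real" where
  "mpoly_eval x p = (\<Sum>m\<leftarrow>p. of_int (fst m) * (\<Prod>i\<leftarrow>snd m. x i))"

definition mpoly_degree :: "mpoly \<Rightarrow> nat" where
  "mpoly_degree p = Max (insert 0 (set (map (\<lambda>m. length (snd m)) p)))"

definition mpoly_vars :: "mpoly \<Rightarrow> nat set" where
  "mpoly_vars p = (\<Union>m\<in>set p. set (snd m))"

datatype rel = RLt | RLe | REq | RGe | RGt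

fun rel_holds :: "rel \<Rightarrow> real \<Rightarrow> real \<Rightarrow> bool" where
  "rel_holds RLt a b = (a < b)"
| "rel_holds RLe a b = (a \<le> b)"
| "rel_holds REq a b = (a = b)"
| "rel_holds RGe a b = (a \<ge> b)"
| "rel_holds RGt a b = (a > b)"

datatype etr_fm = Atom mpoly rel mpoly | FNot etr_fm | FAnd etr_fm etr_fm | FOr etr_fm etr_fm

fun fm_holds :: "(nat \<Rightarrow> real) \<Rightarrow> etr_fm \<Rightarrow> bool" where
  "fm_holds x (Atom p r q) = rel_holds r (mpoly_eval x p) (mpoly_eval x q)"
| "fm_holds x (FNot a) = (\<not> fm_holds x a)"
| "fm_holds x (FAnd a b) = (fm_holds x a \<and> fm_holds x b)"
| "fm_holds x (FOr a b) = (fm_holds x a \<or> fm_holds x b)"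

fun fm_vars :: "etr_fm \<Rightarrow> nat set" where
  "fm_vars (Atom p r q) = mpoly_vars p \<union> mpoly_vars q"
| "fm_vars (FNot a) = fm_vars a"
| "fm_vars (FAnd a b) = fm_vars a \<union> fm_vars b"
| "fm_vars (FOr a b) = fm_vars a \<union> fm_vars b"

fun fm_degree :: "etr_fm \<Rightarrow> nat" where
  "fm_degree (Atom p r q) = max (mpoly_degree p) (mpoly_degree q)"
| "fm_degree (FNot a) = fm_degree a"
| "fm_degree (FAnd a b) = max (fm_degree a) (fm_degree b)"
| "fm_degree (FOr a b) = max (fm_degree a) (fm_degree b)"

fun fm_atoms :: "etr_fm \<Rightarrow> nat" where
  "fm_atoms (Atom p r q) = 1"
| "fm_atoms (FNot a) = fm_atoms a"
| "fm_atoms (FAnd a b) = fm_atoms a + fm_atoms b"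
| "fm_atoms (FOr a b) = fm_atoms a + fm_atoms b"

definition etr_true :: "etr_fm \<Rightarrow> bool" where
  "etr_true \<phi> = (\<exists>x. fm_holds x \<phi>)"

definition simple_graph :: "nat \<Rightarrow> nat set set \<Rightarrow> bool" where
  "simple_graph n E = (\<forall>e\<in>E. \<exists>u v. e = {u, v} \<and> u \<noteq> v \<and> u < n \<and> v < n)"

type_synonym point = "real \<times> real"

definition straight_line_drawing :: "nat \<Rightarrow> (nat \<Rightarrow> point) \<Rightarrow> bool" where
  "straight_line_drawing n p = inj_on p {..<n}"

definition edge_seg :: "(nat \<Rightarrow> point) \<Rightarrow> nat set \<Rightarrow> point set" where
  "edge_seg p e = convex hull (p ` e)"

definition crosses :: "(nat \<Rightarrow> point) \<Rightarrow> nat set \<Rightarrow> nat set \<Rightarrow> bool" where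
  "crosses p e f = (e \<noteq> f \<and> (\<exists>z. z \<in> edge_seg p e \<and> z \<in> edge_seg p f \<and> z \<notin> p ` (e \<inter> f)))"

definition geometric_layer_drawing ::
  "nat \<Rightarrow> nat set set \<Rightarrow> nat \<Rightarrow> (nat \<Rightarrow> point) \<Rightarrow> (nat set \<Rightarrow> nat) \<Rightarrow> bool" where
  "geometric_layer_drawing n E l p col =
     (straight_line_drawing n p \<and> (\<forall>e\<in>E. col e \<in> {1..l}) \<and>
      (\<forall>e\<in>E. \<forall>f\<in>E. col e = col f \<longrightarrow> \<not> crosses p e f))"

definition geometric_thickness_yes :: "nat \<Rightarrow> nat set set \<Rightarrow> nat \<Rightarrow> bool" where
  "geometric_thickness_yes n E l = (\<exists>p col. geometric_layer_drawing n E l p col)"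

end

(*
  Vertex i is placed at (x_(2i), x_(2i+1)), and edge number j gets a colour x_(2n+j), forced by
  a disjunction of equations to be an integer in {1..min(l, m)}.
  Whether two edges cross is decided by signs of orientation determinants (degree 2) and dot
  products: vertex-disjoint edges cross iff each separates the endpoints of the other, i.e. both
  products of orientations are negative (degree 4), or an endpoint of one lies on the other;
  edges sharing a vertex w cross iff they are collinear and leave w in the same direction.
  Forbidding a crossing for every ordered pair of equally coloured edges costs O(m^2) = O(n^4)
  atoms, and distinctness of the vertex positions costs O(n^2).
*)

theory Submission
  imports Defs
begin

section \<open>Orientation and intersection of segments\<close>

definition cross2 :: "point \<Rightarrow> point \<Rightarrow> real" where
  "cross2 u v = fst u * snd v - snd u * fst v"

lemma cross2_self [simp]: "cross2 u u = 0"
  by (simp add: cross2_def)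

lemma cross2_scaleR_right [simp]: "cross2 u (r *\<^sub>R v) = r * cross2 u v"
  by (simp add: cross2_def algebra_simps)

lemma cross2_eq_0_imp_parallel:
  assumes "cross2 u v = 0" and "u \<noteq> 0"
  shows "v = ((v \<bullet> u) / (u \<bullet> u)) *\<^sub>R u"
proof -
  obtain u1 u2 v1 v2 where uv: "u = (u1, u2)" "v = (v1, v2)" by (cases u, cases v)
  have "u \<bullet> u \<noteq> 0" using assms(2) by simp
  moreover have "v1 * (u1 * u1 + u2 * u2) = (v1 * u1 + v2 * u2) * u1"
    and "v2 * (u1 * u1 + u2 * u2) = (v1 * u1 + v2 * u2) * u2"
    using assms(1) unfolding uv cross2_def by (simp_all add: algebra_simps)
  ultimately show ?thesis unfolding uv by (simp add: field_simps)
qed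

definition orient :: "point \<Rightarrow> point \<Rightarrow> point \<Rightarrow> real" where
  "orient a b c = cross2 (b - a) (c - a)"

lemma orient_same [simp]: "orient a b a = 0" "orient a b b = 0"
  by (simp_all add: orient_def cross2_def)

lemma orient_convex_comb:
  "orient a b ((1 - s) *\<^sub>R c + s *\<^sub>R d) = (1 - s) * orient a b c + s * orient a b d"
  by (simp add: orient_def cross2_def algebra_simps)

lemma orient_eq_0_if_in_segment: "z \<in> closed_segment a b \<Longrightarrow> orient a b z = 0"
  by (auto simp: in_segment orient_convex_comb)

lemma on_line_if_orient_eq_0:
  assumes "a \<noteq> b" and "orient a b c = 0"
  obtains t where "c = a + t *\<^sub>R (b - a)"
  using cross2_eq_0_imp_parallel[of "b - a" "c - a"] assms
  by (metis add.commute diff_add_cancel orient_def right_minus_eq)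

lemma in_segment_iff_on_line:
  "z \<in> closed_segment a b \<longleftrightarrow> (\<exists>t. 0 \<le> t \<and> t \<le> 1 \<and> z = a + t *\<^sub>R (b - a))"
  by (simp add: in_segment algebra_simps)

lemma in_segment_iff_orient:
  "c \<in> closed_segment a b \<longleftrightarrow> orient a b c = 0 \<and> (c - a) \<bullet> (c - b) \<le> 0"
proof -
  have dot: "(c - a) \<bullet> (c - b) = t * (t - 1) * ((b - a) \<bullet> (b - a))"
    if "c = a + t *\<^sub>R (b - a)" for t
  proof -
    have "c - a = t *\<^sub>R (b - a)" "c - b = (t - 1) *\<^sub>R (b - a)"
      using that by (simp_all add: algebra_simps)
    then show ?thesis by simp
  qed
  show ?thesis
  proof
    assume c: "c \<in> closed_segment a b"
    then obtain t where t: "0 \<le> t" "t \<le> 1" "c = a + t *\<^sub>R (b - a)"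
      by (auto simp: in_segment_iff_on_line)
    have "t * (t - 1) \<le> 0" using t by (simp add: mult_nonneg_nonpos)
    then show "orient a b c = 0 \<and> (c - a) \<bullet> (c - b) \<le> 0"
      using orient_eq_0_if_in_segment[OF c] dot[OF t(3)] by (simp add: mult_nonpos_nonneg)
  next
    assume c: "orient a b c = 0 \<and> (c - a) \<bullet> (c - b) \<le> 0"
    show "c \<in> closed_segment a b"
    proof (cases "a = b")
      case True
      then have "(c - a) \<bullet> (c - a) \<le> 0" using c by simp
      then have "c = a" by (metis inner_gt_zero_iff not_le right_minus_eq)
      then show ?thesis by simp
    next
      case False
      then obtain t where t: "c = a + t *\<^sub>R (b - a)"
        using on_line_if_orient_eq_0 c by blast
      have "(b - a) \<bullet> (b - a) > 0" using False by simp
      moreover have "t * (t - 1) * ((b - a) \<bullet> (b - a)) \<le> 0" using c dot[OF t] by simp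
      ultimately have "t * (t - 1) \<le> 0" by (metis mult_le_0_iff not_le)
      then show ?thesis using t by (auto simp: in_segment_iff_on_line mult_le_0_iff)
    qed
  qed
qed

lemma real_segments_intersect:
  fixes a b c d :: real
  assumes "closed_segment a b \<inter> closed_segment c d \<noteq> {}"
  shows "c \<in> closed_segment a b \<or> d \<in> closed_segment a b \<or> a \<in> closed_segment c d \<or> b \<in> closed_segment c d"
  using assms by (auto simp: closed_segment_eq_real_ivl split: if_splits)

lemma collinear_segments_intersect:
  assumes "orient a b c = 0" and "orient a b d = 0"
    and "z \<in> closed_segment a b" and "z \<in> closed_segment c d"
  shows "c \<in> closed_segment a b \<or> d \<in> closed_segment a b \<or> a \<in> closed_segment c d \<or> b \<in> closed_segment c d"
proof (cases "a = b")
  case True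
  then show ?thesis using assms(3,4) by auto
next
  case False
  define f where "f t = a + t *\<^sub>R (b - a)" for t
  have seg_f: "closed_segment (f s) (f t) = f ` closed_segment s t" for s t
  proof -
    have "closed_segment (s *\<^sub>R (b - a)) (t *\<^sub>R (b - a)) = (\<lambda>r. r *\<^sub>R (b - a)) ` closed_segment s t"
      by (rule closed_segment_linear_image) simp
    then show ?thesis unfolding f_def closed_segment_translation by (simp add: image_image)
  qed
  have "inj f" using False by (auto simp: f_def inj_on_def)
  obtain \<gamma> \<delta> where cd: "c = f \<gamma>" "d = f \<delta>"
    using on_line_if_orient_eq_0[OF False] assms(1,2) unfolding f_def by metis
  have ab: "a = f 0" "b = f 1" by (simp_all add: f_def)
  have "closed_segment 0 1 \<inter> closed_segment \<gamma> \<delta> \<noteq> {}"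
    using assms(3,4) \<open>inj f\<close> unfolding ab cd seg_f by (auto dest: injD)
  from real_segments_intersect[OF this] show ?thesis
    unfolding ab cd seg_f by blast
qed

lemma convex_comb_eq_0_imp_opposite_signs:
  fixes x y s :: real
  assumes "0 < s" "s < 1" and "(1 - s) * x + s * y = 0"
  shows "(x = 0 \<and> y = 0) \<or> x * y < 0"
proof (cases "x = 0")
  case True
  then show ?thesis using assms by simp
next
  case False
  have "s * y = - ((1 - s) * x)" using assms(3) by linarith
  then have "s * (x * y) = - ((1 - s) * (x * x))" by (metis mult.left_commute mult_minus_right)
  moreover have "x * x > 0" using False by (auto simp: zero_less_mult_iff)
  then have "(1 - s) * (x * x) > 0" using assms(2) by simp
  ultimately have "s * (x * y) < 0" by linarith
  then show ?thesis using assms(1) by (simp add: mult_less_0_iff)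
qed

lemma weighted_point_in_segment:
  fixes x y :: real and c d :: "'a::real_vector"
  assumes "x * y < 0"
  shows "(1 / (y - x)) *\<^sub>R (y *\<^sub>R c - x *\<^sub>R d) \<in> closed_segment c d"
proof -
  have "x \<noteq> y" using assms by auto
  have "0 \<le> x / (x - y)" "x / (x - y) \<le> 1"
    using assms by (auto simp: mult_less_0_iff divide_simps)
  moreover have "(1 / (y - x)) *\<^sub>R (y *\<^sub>R c - x *\<^sub>R d)
      = (1 - x / (x - y)) *\<^sub>R c + (x / (x - y)) *\<^sub>R d"
  proof -
    have "1 - x / (x - y) = y / (y - x)" "x / (x - y) = - (x / (y - x))"
      using \<open>x \<noteq> y\<close> by (simp_all add: field_simps)
    moreover have "(1 / (y - x)) *\<^sub>R (y *\<^sub>R c - x *\<^sub>R d) = (y / (y - x)) *\<^sub>R c - (x / (y - x)) *\<^sub>R d"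
      by (simp add: scaleR_diff_right)
    ultimately show ?thesis by (metis scaleR_minus_left diff_conv_add_uminus)
  qed
  ultimately show ?thesis unfolding in_segment(1) by blast
qed

lemma orient_exchange:
  "orient c d a *\<^sub>R b - orient c d b *\<^sub>R a = orient a b d *\<^sub>R c - orient a b c *\<^sub>R d"
proof -
  obtain a1 a2 b1 b2 c1 c2 d1 d2 where pts: "a = (a1, a2)" "b = (b1, b2)" "c = (c1, c2)" "d = (d1, d2)"
    by (cases a, cases b, cases c, cases d)
  show ?thesis unfolding pts by (simp add: orient_def cross2_def) algebra
qed

lemma orient_diff_exchange: "orient c d a - orient c d b = orient a b d - orient a b c"
  by (simp add: orient_def cross2_def algebra_simps)

lemma proper_crossing_imp_segments_intersect:
  assumes "orient a b c * orient a b d < 0" and "orient c d a * orient c d b < 0"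
  shows "closed_segment a b \<inter> closed_segment c d \<noteq> {}"
proof -
  let ?z = "(1 / (orient c d a - orient c d b)) *\<^sub>R (orient c d a *\<^sub>R b - orient c d b *\<^sub>R a)"
  have "?z \<in> closed_segment b a"
    using weighted_point_in_segment[of "orient c d b" "orient c d a" b a] assms(2)
    by (simp add: mult.commute)
  moreover have "?z \<in> closed_segment c d"
    using weighted_point_in_segment[of "orient a b c" "orient a b d" c d] assms(1)
    unfolding orient_exchange[of c d a b] orient_diff_exchange[of c d a b] .
  ultimately show ?thesis by (auto simp: closed_segment_commute)
qed

lemma segments_intersect_cases:
  assumes zab: "z \<in> closed_segment a b" and zcd: "z \<in> closed_segment c d"
  shows "orient a b c * orient a b d < 0 \<and> orient c d a * orient c d b < 0 \<or>
     c \<in> closed_segment a b \<or> d \<in> closed_segment a b \<or>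
     a \<in> closed_segment c d \<or> b \<in> closed_segment c d"
proof (cases "z \<in> {a, b, c, d}")
  case True
  then show ?thesis using zab zcd by auto
next
  case False
  have "z \<in> open_segment a b" "z \<in> open_segment c d"
    using zab zcd False by (auto simp: open_segment_def)
  then obtain t s where t: "0 < t" "t < 1" "z = (1 - t) *\<^sub>R a + t *\<^sub>R b"
    and s: "0 < s" "s < 1" "z = (1 - s) *\<^sub>R c + s *\<^sub>R d"
    by (auto simp: in_segment(2))
  have "(orient a b c = 0 \<and> orient a b d = 0) \<or> orient a b c * orient a b d < 0"
    using orient_eq_0_if_in_segment[OF zab] s
    by (intro convex_comb_eq_0_imp_opposite_signs[of s]) (simp_all add: orient_convex_comb)
  moreover have "(orient c d a = 0 \<and> orient c d b = 0) \<or> orient c d a * orient c d b < 0"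
    using orient_eq_0_if_in_segment[OF zcd] t
    by (intro convex_comb_eq_0_imp_opposite_signs[of t]) (simp_all add: orient_convex_comb)
  ultimately consider "orient a b c = 0" "orient a b d = 0" | "orient c d a = 0" "orient c d b = 0"
    | "orient a b c * orient a b d < 0 \<and> orient c d a * orient c d b < 0"
    by argo
  then show ?thesis
  proof cases
    case 1
    from collinear_segments_intersect[OF 1 zab zcd] show ?thesis by argo
  next
    case 2
    from collinear_segments_intersect[OF 2 zcd zab] show ?thesis by argo
  qed argo
qed

lemma segments_intersect_iff:
  "closed_segment a b \<inter> closed_segment c d \<noteq> {} \<longleftrightarrow>
     orient a b c * orient a b d < 0 \<and> orient c d a * orient c d b < 0 \<or>
     c \<in> closed_segment a b \<or> d \<in> closed_segment a b \<or>
     a \<in> closed_segment c d \<or> b \<in> closed_segment c d"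
  (is "?meet \<longleftrightarrow> ?proper \<or> ?touch")
proof
  assume ?meet
  then obtain z where "z \<in> closed_segment a b" "z \<in> closed_segment c d" by blast
  then show "?proper \<or> ?touch" by (rule segments_intersect_cases)
next
  assume "?proper \<or> ?touch"
  then show ?meet
  proof
    assume ?proper
    then show ?meet by (elim conjE) (rule proper_crossing_imp_segments_intersect)
  next
    assume ?touch
    then show ?meet by (elim disjE) (use ends_in_segment in fastforce)+
  qed
qed

lemma common_end_overlap_imp_same_direction:
  assumes "a \<noteq> w" and za: "z \<in> closed_segment w a" and zd: "z \<in> closed_segment w d"
    and "z \<noteq> w"
  shows "orient w a d = 0 \<and> (a - w) \<bullet> (d - w) > 0"
proof -
  obtain t where "0 \<le> t" and zt: "z = w + t *\<^sub>R (a - w)"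
    using za by (auto simp: in_segment_iff_on_line)
  obtain s where "0 \<le> s" and zs: "z = w + s *\<^sub>R (d - w)"
    using zd by (auto simp: in_segment_iff_on_line)
  have "0 < t" using \<open>0 \<le> t\<close> \<open>z \<noteq> w\<close> zt by (cases "t = 0") auto
  have "0 < s" using \<open>0 \<le> s\<close> \<open>z \<noteq> w\<close> zs by (cases "s = 0") auto
  have ts: "t *\<^sub>R (a - w) = s *\<^sub>R (d - w)" using zt zs by simp
  have "s * orient w a d = cross2 (a - w) (t *\<^sub>R (a - w))"
    by (simp add: orient_def ts)
  then have "orient w a d = 0" using \<open>0 < s\<close> by simp
  have "s * ((a - w) \<bullet> (d - w)) = t * ((a - w) \<bullet> (a - w))"
    using arg_cong[OF ts, of "inner (a - w)"] by simp
  moreover have "t * ((a - w) \<bullet> (a - w)) > 0" using \<open>0 < t\<close> assms(1) by simp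
  ultimately have "s * ((a - w) \<bullet> (d - w)) > 0" by argo
  then have "(a - w) \<bullet> (d - w) > 0" using \<open>0 < s\<close> by (simp add: zero_less_mult_iff)
  with \<open>orient w a d = 0\<close> show ?thesis by blast
qed

lemma segments_overlap_at_common_end_iff:
  assumes "a \<noteq> w" and "d \<noteq> w"
  shows "(\<exists>z \<in> closed_segment w a \<inter> closed_segment w d. z \<noteq> w) \<longleftrightarrow>
    orient w a d = 0 \<and> (a - w) \<bullet> (d - w) > 0"
proof
  assume "\<exists>z \<in> closed_segment w a \<inter> closed_segment w d. z \<noteq> w"
  then show "orient w a d = 0 \<and> (a - w) \<bullet> (d - w) > 0"
    using common_end_overlap_imp_same_direction[OF assms(1)] by blast
next
  assume h: "orient w a d = 0 \<and> (a - w) \<bullet> (d - w) > 0"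
  define r where "r = ((d - w) \<bullet> (a - w)) / ((a - w) \<bullet> (a - w))"
  have "a - w \<noteq> 0" using assms(1) by simp
  then have "d - w = r *\<^sub>R (a - w)"
    using cross2_eq_0_imp_parallel[of "a - w" "d - w"] h unfolding r_def orient_def by blast
  then have d: "d = w + r *\<^sub>R (a - w)" by (metis add.commute diff_add_cancel)
  have "r > 0" using h \<open>a - w \<noteq> 0\<close> unfolding r_def by (simp add: inner_commute)
  show "\<exists>z \<in> closed_segment w a \<inter> closed_segment w d. z \<noteq> w"
  proof (cases "r \<le> 1")
    case True
    then have "d \<in> closed_segment w a"
      using \<open>r > 0\<close> d by (auto simp: in_segment_iff_on_line intro!: exI[of _ r])
    then show ?thesis using assms(2) by auto
  next
    case False
    then have "a = w + (1 / r) *\<^sub>R (d - w)" using d by simp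
    then have "a \<in> closed_segment w d"
      using False by (auto simp: in_segment_iff_on_line intro!: exI[of _ "1 / r"])
    then show ?thesis using assms(1) by auto
  qed
qed

section \<open>Polynomials and formulas\<close>

definition mp_var :: "nat \<Rightarrow> mpoly" where
  "mp_var i = [(1, [i])]"

definition mp_const :: "int \<Rightarrow> mpoly" where
  "mp_const c = [(c, [])]"

definition mp_add :: "mpoly \<Rightarrow> mpoly \<Rightarrow> mpoly" where
  "mp_add p q = p @ q"

definition mp_sub :: "mpoly \<Rightarrow> mpoly \<Rightarrow> mpoly" where
  "mp_sub p q = p @ map (\<lambda>(c, vs). (- c, vs)) q"

definition mp_monom_mul :: "int \<Rightarrow> nat list \<Rightarrow> mpoly \<Rightarrow> mpoly" where
  "mp_monom_mul c vs q = map (\<lambda>(d, ws). (c * d, vs @ ws)) q"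

definition mp_mul :: "mpoly \<Rightarrow> mpoly \<Rightarrow> mpoly" where
  "mp_mul p q = concat (map (\<lambda>(c, vs). mp_monom_mul c vs q) p)"

lemma mpoly_eval_Nil [simp]: "mpoly_eval x [] = 0"
  by (simp add: mpoly_eval_def)

lemma mpoly_eval_var [simp]: "mpoly_eval x (mp_var i) = x i"
  by (simp add: mpoly_eval_def mp_var_def)

lemma mpoly_eval_const [simp]: "mpoly_eval x (mp_const c) = of_int c"
  by (simp add: mpoly_eval_def mp_const_def)

lemma mpoly_eval_Cons [simp]:
  "mpoly_eval x ((c, vs) # p) = of_int c * (\<Prod>i\<leftarrow>vs. x i) + mpoly_eval x p"
  by (simp add: mpoly_eval_def)

lemma mpoly_eval_append [simp]: "mpoly_eval x (p @ q) = mpoly_eval x p + mpoly_eval x q"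
  by (simp add: mpoly_eval_def)

lemma mpoly_eval_add [simp]: "mpoly_eval x (mp_add p q) = mpoly_eval x p + mpoly_eval x q"
  by (simp add: mp_add_def)

lemma mpoly_eval_sub [simp]: "mpoly_eval x (mp_sub p q) = mpoly_eval x p - mpoly_eval x q"
  by (induction q) (auto simp: mpoly_eval_def mp_sub_def)

lemma mpoly_eval_monom_mul [simp]:
  "mpoly_eval x (mp_monom_mul c vs q) = of_int c * (\<Prod>i\<leftarrow>vs. x i) * mpoly_eval x q"
  by (induction q) (auto simp: mp_monom_mul_def algebra_simps)

lemma mpoly_eval_mul [simp]: "mpoly_eval x (mp_mul p q) = mpoly_eval x p * mpoly_eval x q"
  by (induction p) (auto simp: mp_mul_def algebra_simps)

lemma mpoly_degree_le_iff: "mpoly_degree p \<le> k \<longleftrightarrow> (\<forall>(c, vs) \<in> set p. length vs \<le> k)"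
  by (auto simp: mpoly_degree_def)

lemma mpoly_degree_Nil [simp]: "mpoly_degree [] = 0"
  by (simp add: mpoly_degree_def)

lemma mpoly_degree_mul_le:
  assumes "mpoly_degree p \<le> i" and "mpoly_degree q \<le> j"
  shows "mpoly_degree (mp_mul p q) \<le> i + j"
  using assms by (fastforce simp: mpoly_degree_le_iff mp_mul_def mp_monom_mul_def intro: add_mono)

lemma mpoly_vars_Nil [simp]: "mpoly_vars [] = {}"
  by (simp add: mpoly_vars_def)

lemma mpoly_vars_Cons [simp]: "mpoly_vars ((c, vs) # p) = set vs \<union> mpoly_vars p"
  by (simp add: mpoly_vars_def)

lemma mpoly_vars_append [simp]: "mpoly_vars (p @ q) = mpoly_vars p \<union> mpoly_vars q"
  by (simp add: mpoly_vars_def)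

lemma mpoly_vars_monom_mul: "mpoly_vars (mp_monom_mul c vs q) \<subseteq> set vs \<union> mpoly_vars q"
  by (induction q) (auto simp: mp_monom_mul_def mpoly_vars_def)

lemma mpoly_vars_mul: "mpoly_vars (mp_mul p q) \<subseteq> mpoly_vars p \<union> mpoly_vars q"
proof (induction p)
  case (Cons m p)
  then show ?case using mpoly_vars_monom_mul[of "fst m" "snd m" q] by (cases m) (auto simp: mp_mul_def)
qed (simp add: mp_mul_def mpoly_vars_def)

lemma mpoly_vars_mul_subset:
  "mpoly_vars p \<subseteq> V \<Longrightarrow> mpoly_vars q \<subseteq> V \<Longrightarrow> mpoly_vars (mp_mul p q) \<subseteq> V"
  using mpoly_vars_mul by blast

text \<open>The atoms \<open>0 = 0\<close> and \<open>0 < 0\<close> serve as the empty conjunction and disjunction.\<close>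

fun fm_conj :: "etr_fm list \<Rightarrow> etr_fm" where
  "fm_conj [] = Atom [] REq []"
| "fm_conj (\<phi> # \<phi>s) = FAnd \<phi> (fm_conj \<phi>s)"

fun fm_disj :: "etr_fm list \<Rightarrow> etr_fm" where
  "fm_disj [] = Atom [] RLt []"
| "fm_disj (\<phi> # \<phi>s) = FOr \<phi> (fm_disj \<phi>s)"

lemma fm_holds_conj [simp]: "fm_holds x (fm_conj \<phi>s) \<longleftrightarrow> (\<forall>\<phi> \<in> set \<phi>s. fm_holds x \<phi>)"
  by (induction \<phi>s) auto

lemma fm_holds_disj [simp]: "fm_holds x (fm_disj \<phi>s) \<longleftrightarrow> (\<exists>\<phi> \<in> set \<phi>s. fm_holds x \<phi>)"
  by (induction \<phi>s) auto

lemma fm_vars_conj [simp]: "fm_vars (fm_conj \<phi>s) = (\<Union>\<phi> \<in> set \<phi>s. fm_vars \<phi>)"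
  by (induction \<phi>s) (auto simp: mpoly_vars_def)

lemma fm_vars_disj [simp]: "fm_vars (fm_disj \<phi>s) = (\<Union>\<phi> \<in> set \<phi>s. fm_vars \<phi>)"
  by (induction \<phi>s) (auto simp: mpoly_vars_def)

lemma fm_degree_conj_le: "(\<And>\<phi>. \<phi> \<in> set \<phi>s \<Longrightarrow> fm_degree \<phi> \<le> k) \<Longrightarrow> fm_degree (fm_conj \<phi>s) \<le> k"
  by (induction \<phi>s) (auto simp: mpoly_degree_def)

lemma fm_degree_disj_le: "(\<And>\<phi>. \<phi> \<in> set \<phi>s \<Longrightarrow> fm_degree \<phi> \<le> k) \<Longrightarrow> fm_degree (fm_disj \<phi>s) \<le> k"
  by (induction \<phi>s) (auto simp: mpoly_degree_def)

lemma fm_atoms_conj_le: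
  "(\<And>\<phi>. \<phi> \<in> set \<phi>s \<Longrightarrow> fm_atoms \<phi> \<le> k) \<Longrightarrow> fm_atoms (fm_conj \<phi>s) \<le> 1 + length \<phi>s * k"
  by (induction \<phi>s) fastforce+

lemma fm_atoms_disj_le:
  "(\<And>\<phi>. \<phi> \<in> set \<phi>s \<Longrightarrow> fm_atoms \<phi> \<le> k) \<Longrightarrow> fm_atoms (fm_disj \<phi>s) \<le> 1 + length \<phi>s * k"
  by (induction \<phi>s) fastforce+

section \<open>Crossings of drawn edges\<close>

definition vertex_pos :: "(nat \<Rightarrow> real) \<Rightarrow> nat \<Rightarrow> point" where
  "vertex_pos x = (\<lambda>i. (x (2 * i), x (2 * i + 1)))"

definition mp_x :: "nat \<Rightarrow> mpoly" where
  "mp_x i = mp_var (2 * i)"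

definition mp_y :: "nat \<Rightarrow> mpoly" where
  "mp_y i = mp_var (2 * i + 1)"

definition orient_mp :: "nat \<Rightarrow> nat \<Rightarrow> nat \<Rightarrow> mpoly" where
  "orient_mp a b c =
     mp_sub (mp_mul (mp_sub (mp_x b) (mp_x a)) (mp_sub (mp_y c) (mp_y a)))
            (mp_mul (mp_sub (mp_y b) (mp_y a)) (mp_sub (mp_x c) (mp_x a)))"

definition dot_mp :: "nat \<Rightarrow> nat \<Rightarrow> nat \<Rightarrow> nat \<Rightarrow> mpoly" where
  "dot_mp a b c d =
     mp_add (mp_mul (mp_sub (mp_x a) (mp_x b)) (mp_sub (mp_x c) (mp_x d)))
            (mp_mul (mp_sub (mp_y a) (mp_y b)) (mp_sub (mp_y c) (mp_y d)))"

lemma mpoly_eval_orient_mp [simp]: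
  "mpoly_eval x (orient_mp a b c) = orient (vertex_pos x a) (vertex_pos x b) (vertex_pos x c)"
  by (simp add: orient_mp_def orient_def cross2_def vertex_pos_def mp_x_def mp_y_def)

lemma mpoly_eval_dot_mp [simp]:
  "mpoly_eval x (dot_mp a b c d) = (vertex_pos x a - vertex_pos x b) \<bullet> (vertex_pos x c - vertex_pos x d)"
  by (simp add: dot_mp_def vertex_pos_def mp_x_def mp_y_def)

lemma mpoly_degree_orient_mp: "mpoly_degree (orient_mp a b c) \<le> 2"
  by (simp add: orient_mp_def mpoly_degree_le_iff mp_sub_def mp_mul_def mp_monom_mul_def mp_x_def
      mp_y_def mp_var_def)

lemma mpoly_degree_dot_mp: "mpoly_degree (dot_mp a b c d) \<le> 2"
  by (simp add: dot_mp_def mpoly_degree_le_iff mp_add_def mp_sub_def mp_mul_def mp_monom_mul_def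
      mp_x_def mp_y_def mp_var_def)

lemma mpoly_vars_orient_mp:
  "{a, b, c} \<subseteq> {..<n} \<Longrightarrow> mpoly_vars (orient_mp a b c) \<subseteq> {..<2 * n}"
  by (auto simp: orient_mp_def mpoly_vars_def mp_sub_def mp_mul_def mp_monom_mul_def mp_x_def
      mp_y_def mp_var_def)

lemma mpoly_vars_dot_mp:
  "{a, b, c, d} \<subseteq> {..<n} \<Longrightarrow> mpoly_vars (dot_mp a b c d) \<subseteq> {..<2 * n}"
  by (auto simp: dot_mp_def mpoly_vars_def mp_add_def mp_sub_def mp_mul_def mp_monom_mul_def mp_x_def
      mp_y_def mp_var_def)

definition on_segment_fm :: "nat \<Rightarrow> nat \<Rightarrow> nat \<Rightarrow> etr_fm" where
  "on_segment_fm q a b = FAnd (Atom (orient_mp a b q) REq []) (Atom (dot_mp q a q b) RLe [])"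

definition segments_intersect_fm :: "nat \<Rightarrow> nat \<Rightarrow> nat \<Rightarrow> nat \<Rightarrow> etr_fm" where
  "segments_intersect_fm a b c d =
     FOr (FAnd (Atom (mp_mul (orient_mp a b c) (orient_mp a b d)) RLt [])
               (Atom (mp_mul (orient_mp c d a) (orient_mp c d b)) RLt []))
         (fm_disj [on_segment_fm c a b, on_segment_fm d a b, on_segment_fm a c d, on_segment_fm b c d])"

definition common_end_overlap_fm :: "nat \<Rightarrow> nat \<Rightarrow> nat \<Rightarrow> etr_fm" where
  "common_end_overlap_fm w a d = FAnd (Atom (orient_mp w a d) REq []) (Atom (dot_mp a w d w) RGt [])"

lemma fm_holds_on_segment_fm:
  "fm_holds x (on_segment_fm q a b) \<longleftrightarrow>
     vertex_pos x q \<in> closed_segment (vertex_pos x a) (vertex_pos x b)"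
  by (simp add: on_segment_fm_def in_segment_iff_orient)

lemma fm_holds_segments_intersect_fm:
  "fm_holds x (segments_intersect_fm a b c d) \<longleftrightarrow>
     closed_segment (vertex_pos x a) (vertex_pos x b) \<inter> closed_segment (vertex_pos x c) (vertex_pos x d) \<noteq> {}"
  by (simp add: segments_intersect_fm_def fm_holds_on_segment_fm segments_intersect_iff)

lemma fm_holds_common_end_overlap_fm:
  assumes "vertex_pos x a \<noteq> vertex_pos x w" and "vertex_pos x d \<noteq> vertex_pos x w"
  shows "fm_holds x (common_end_overlap_fm w a d) \<longleftrightarrow>
    (\<exists>z \<in> closed_segment (vertex_pos x w) (vertex_pos x a) \<inter> closed_segment (vertex_pos x w) (vertex_pos x d).
       z \<noteq> vertex_pos x w)"
  using assms by (simp add: common_end_overlap_fm_def segments_overlap_at_common_end_iff)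

text \<open>Edges sharing a vertex always meet there, so for them only an overlap beyond it is a crossing.\<close>

definition crossing_fm :: "nat set \<Rightarrow> nat set \<Rightarrow> etr_fm" where
  "crossing_fm e f =
     (if e \<inter> f = {} then segments_intersect_fm (Min e) (Max e) (Min f) (Max f)
      else common_end_overlap_fm (the_elem (e \<inter> f)) (the_elem (e - f)) (the_elem (f - e)))"

lemma simple_graph_edgeE:
  assumes "simple_graph n E" and "e \<in> E"
  obtains a b where "e = {a, b}" "a < b" "b < n"
proof -
  obtain u v where "e = {u, v}" "u \<noteq> v" "u < n" "v < n"
    using assms unfolding simple_graph_def by blast
  then show ?thesis using that[of u v] that[of v u] by (cases "u < v") (auto simp: insert_commute)
qed

lemma simple_graph_adjacent_edgesE:
  assumes "simple_graph n E" and "e \<in> E" "f \<in> E" "e \<noteq> f" "e \<inter> f \<noteq> {}"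
  obtains w a d where "e = {w, a}" "f = {w, d}" "a \<noteq> w" "d \<noteq> w" "a \<noteq> d" "w < n" "a < n" "d < n"
proof -
  obtain a b c d where e: "e = {a, b}" "a < b" "b < n" and f: "f = {c, d}" "c < d" "d < n"
    by (meson assms(1-3) simple_graph_edgeE)
  consider "a = c" | "a = d" | "b = c" | "b = d" using assms(5) e f by auto
  then show ?thesis
  proof cases
    case 1
    then show ?thesis using that[of a b d] assms(4) e f by auto
  next
    case 2
    then show ?thesis using that[of a b c] assms(4) e f by (auto simp: insert_commute)
  next
    case 3
    then show ?thesis using that[of b a d] assms(4) e f by (auto simp: insert_commute)
  next
    case 4
    then show ?thesis using that[of b a c] assms(4) e f by (auto simp: insert_commute)
  qed
qed

lemma edge_seg_pair: "edge_seg p {a, b} = closed_segment (p a) (p b)"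
  by (simp add: edge_seg_def segment_convex_hull)

lemma crossing_fm_cases:
  assumes "simple_graph n E" and "e \<in> E" "f \<in> E" "e \<noteq> f"
  obtains (disjoint) a b c d where "e = {a, b}" "f = {c, d}" "e \<inter> f = {}" "{a, b, c, d} \<subseteq> {..<n}"
    "crossing_fm e f = segments_intersect_fm a b c d"
  | (adjacent) w a d where "e = {w, a}" "f = {w, d}" "a \<noteq> w" "d \<noteq> w" "a \<noteq> d"
    "{w, a, d} \<subseteq> {..<n}" "crossing_fm e f = common_end_overlap_fm w a d"
proof (cases "e \<inter> f = {}")
  case True
  obtain a b where "e = {a, b}" "a < b" "b < n" by (meson assms(1,2) simple_graph_edgeE)
  moreover obtain c d where "f = {c, d}" "c < d" "d < n" by (meson assms(1,3) simple_graph_edgeE)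
  ultimately show ?thesis using disjoint[of a b c d] True by (simp add: crossing_fm_def)
next
  case False
  obtain w a d where "e = {w, a}" "f = {w, d}" "a \<noteq> w" "d \<noteq> w" "a \<noteq> d" "w < n" "a < n" "d < n"
    using simple_graph_adjacent_edgesE[OF assms False] by blast
  moreover have "e \<inter> f = {w}" "e - f = {a}" "f - e = {d}" using calculation by auto
  ultimately show ?thesis using adjacent[of w a d] by (simp add: crossing_fm_def)
qed

lemma fm_holds_crossing_fm:
  assumes "simple_graph n E" and "e \<in> E" "f \<in> E" "e \<noteq> f"
    and inj: "inj_on (vertex_pos x) {..<n}"
  shows "fm_holds x (crossing_fm e f) \<longleftrightarrow> crosses (vertex_pos x) e f"
  using assms(1-4)
proof (cases rule: crossing_fm_cases)
  case (disjoint a b c d)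
  then show ?thesis
    using \<open>e \<noteq> f\<close> by (auto simp: crosses_def edge_seg_pair fm_holds_segments_intersect_fm)
next
  case (adjacent w a d)
  then have "e \<inter> f = {w}" by auto
  moreover have "vertex_pos x a \<noteq> vertex_pos x w" "vertex_pos x d \<noteq> vertex_pos x w"
    using inj adjacent by (auto dest: inj_onD)
  ultimately show ?thesis
    using adjacent \<open>e \<noteq> f\<close> by (auto simp: crosses_def edge_seg_pair fm_holds_common_end_overlap_fm)
qed

lemma segments_intersect_fm_size:
  assumes "{a, b, c, d} \<subseteq> {..<n}"
  shows "fm_vars (segments_intersect_fm a b c d) \<subseteq> {..<2 * n}"
    and "fm_degree (segments_intersect_fm a b c d) \<le> 4"
    and "fm_atoms (segments_intersect_fm a b c d) = 11"
proof -
  show "fm_vars (segments_intersect_fm a b c d) \<subseteq> {..<2 * n}"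
    using assms by (simp add: segments_intersect_fm_def on_segment_fm_def mpoly_vars_mul_subset
        mpoly_vars_orient_mp mpoly_vars_dot_mp)
  have "mpoly_degree (mp_mul (orient_mp a b c) (orient_mp a b d)) \<le> 4"
    and "mpoly_degree (mp_mul (orient_mp c d a) (orient_mp c d b)) \<le> 4"
    using mpoly_degree_mul_le[OF mpoly_degree_orient_mp mpoly_degree_orient_mp] by simp_all
  then show "fm_degree (segments_intersect_fm a b c d) \<le> 4"
    by (simp add: segments_intersect_fm_def on_segment_fm_def
        le_trans[OF mpoly_degree_orient_mp] le_trans[OF mpoly_degree_dot_mp])
  show "fm_atoms (segments_intersect_fm a b c d) = 11"
    by (simp add: segments_intersect_fm_def on_segment_fm_def)
qed

lemma common_end_overlap_fm_size:
  assumes "{w, a, d} \<subseteq> {..<n}"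
  shows "fm_vars (common_end_overlap_fm w a d) \<subseteq> {..<2 * n}"
    and "fm_degree (common_end_overlap_fm w a d) \<le> 4"
    and "fm_atoms (common_end_overlap_fm w a d) = 2"
  using assms mpoly_degree_orient_mp[of w a d] mpoly_degree_dot_mp[of a w d w]
  by (simp_all add: common_end_overlap_fm_def mpoly_vars_orient_mp mpoly_vars_dot_mp)

lemma crossing_fm_size:
  assumes "simple_graph n E" and "e \<in> E" "f \<in> E" "e \<noteq> f"
  shows "fm_vars (crossing_fm e f) \<subseteq> {..<2 * n}" and "fm_degree (crossing_fm e f) \<le> 4"
    and "fm_atoms (crossing_fm e f) \<le> 11"
  using assms by (cases rule: crossing_fm_cases; simp add: segments_intersect_fm_size common_end_overlap_fm_size)+

lemma simple_graph_subset_pairs: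
  "simple_graph n E \<Longrightarrow> E \<subseteq> (\<lambda>(u, v). {u, v}) ` ({..<n} \<times> {..<n})"
  unfolding simple_graph_def by fastforce

lemma simple_graph_finite: "simple_graph n E \<Longrightarrow> finite E"
  using simple_graph_subset_pairs finite_subset by blast

lemma card_simple_graph_le: "simple_graph n E \<Longrightarrow> card E \<le> n\<^sup>2"
proof -
  assume "simple_graph n E"
  then have "card E \<le> card ((\<lambda>(u, v). {u, v}) ` ({..<n} \<times> {..<n}))"
    by (intro card_mono simple_graph_subset_pairs) auto
  also have "\<dots> \<le> card ({..<n} \<times> {..<n})" by (rule card_image_le) simp
  finally show ?thesis by (simp add: power2_eq_square)
qed

lemma geometric_layer_drawing_cong:
  assumes G: "simple_graph n E" and pq: "\<forall>i<n. p i = q i"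
  shows "geometric_layer_drawing n E l p col \<longleftrightarrow> geometric_layer_drawing n E l q col"
proof -
  have img: "p ` A = q ` A" if "A \<subseteq> e" "e \<in> E" for A e
  proof -
    have "e \<subseteq> {..<n}" using G \<open>e \<in> E\<close> unfolding simple_graph_def by fastforce
    then show ?thesis using that pq by (auto simp: image_def subset_iff)
  qed
  have "crosses p e f \<longleftrightarrow> crosses q e f" if "e \<in> E" "f \<in> E" for e f
    using img[OF order_refl that(1)] img[OF order_refl that(2)] img[OF Int_lower1 that(1)]
    unfolding crosses_def edge_seg_def by simp
  moreover have "inj_on p {..<n} \<longleftrightarrow> inj_on q {..<n}" using pq by (intro inj_on_cong) auto
  ultimately show ?thesis
    by (auto simp: geometric_layer_drawing_def straight_line_drawing_def)
qed

section \<open>The sentence for geometric thickness\<close>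

definition off_diagonal :: "nat \<Rightarrow> (nat \<times> nat) list" where
  "off_diagonal n = filter (\<lambda>(i, j). i \<noteq> j) (List.product [0..<n] [0..<n])"

lemma set_off_diagonal [simp]: "set (off_diagonal n) = {(i, j). i < n \<and> j < n \<and> i \<noteq> j}"
  by (auto simp: off_diagonal_def)

lemma length_off_diagonal_le: "length (off_diagonal n) \<le> n\<^sup>2"
  using length_filter_le[of _ "List.product [0..<n] [0..<n]"]
  by (simp add: off_diagonal_def power2_eq_square)

definition distinct_vertices_fm :: "nat \<Rightarrow> etr_fm" where
  "distinct_vertices_fm n =
     fm_conj (map (\<lambda>(i, j). FNot (FAnd (Atom (mp_x i) REq (mp_x j)) (Atom (mp_y i) REq (mp_y j))))
                  (off_diagonal n))"

lemma fm_holds_distinct_vertices_fm: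
  "fm_holds x (distinct_vertices_fm n) \<longleftrightarrow> inj_on (vertex_pos x) {..<n}"
  by (auto simp: distinct_vertices_fm_def inj_on_def vertex_pos_def mp_x_def mp_y_def)

definition colour_in_range_fm :: "nat \<Rightarrow> nat \<Rightarrow> etr_fm" where
  "colour_in_range_fm v k = fm_disj (map (\<lambda>c. Atom (mp_var v) REq (mp_const (int c))) [1..<Suc k])"

lemma fm_holds_colour_in_range_fm: "fm_holds x (colour_in_range_fm v k) \<longleftrightarrow> x v \<in> real ` {1..k}"
  by (auto simp: colour_in_range_fm_def)

definition edge_colours_fm :: "nat \<Rightarrow> nat \<Rightarrow> nat \<Rightarrow> etr_fm" where
  "edge_colours_fm n m k = fm_conj (map (\<lambda>j. colour_in_range_fm (2 * n + j) k) [0..<m])"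

lemma fm_holds_edge_colours_fm:
  "fm_holds x (edge_colours_fm n m k) \<longleftrightarrow> (\<forall>j<m. x (2 * n + j) \<in> real ` {1..k})"
  by (auto simp: edge_colours_fm_def fm_holds_colour_in_range_fm)

definition no_monochromatic_crossing_fm :: "nat \<Rightarrow> nat set list \<Rightarrow> etr_fm" where
  "no_monochromatic_crossing_fm n es =
     fm_conj (map (\<lambda>(j, j'). FOr (FNot (Atom (mp_var (2 * n + j)) REq (mp_var (2 * n + j'))))
                                   (FNot (crossing_fm (es ! j) (es ! j'))))
                  (off_diagonal (length es)))"

lemma fm_holds_no_monochromatic_crossing_fm:
  assumes G: "simple_graph n (set es)" and "distinct es" and inj: "inj_on (vertex_pos x) {..<n}"
  shows "fm_holds x (no_monochromatic_crossing_fm n es) \<longleftrightarrow>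
    (\<forall>j < length es. \<forall>j' < length es. j \<noteq> j' \<and> x (2 * n + j) = x (2 * n + j') \<longrightarrow>
       \<not> crosses (vertex_pos x) (es ! j) (es ! j'))"
proof -
  have "fm_holds x (crossing_fm (es ! j) (es ! j')) \<longleftrightarrow> crosses (vertex_pos x) (es ! j) (es ! j')"
    if "j < length es" "j' < length es" "j \<noteq> j'" for j j'
    using fm_holds_crossing_fm[OF G _ _ _ inj] that assms(2) by (simp add: nth_eq_iff_index_eq)
  then show ?thesis by (auto simp: no_monochromatic_crossing_fm_def)
qed

definition thickness_fm :: "nat \<Rightarrow> nat \<Rightarrow> nat set list \<Rightarrow> etr_fm" where
  "thickness_fm n l es =
     FAnd (distinct_vertices_fm n)
       (FAnd (edge_colours_fm n (length es) (min l (length es))) (no_monochromatic_crossing_fm n es))"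

lemma fm_holds_thickness_fm:
  assumes "simple_graph n (set es)" and "distinct es"
  shows "fm_holds x (thickness_fm n l es) \<longleftrightarrow>
    inj_on (vertex_pos x) {..<n} \<and>
    (\<forall>j < length es. x (2 * n + j) \<in> real ` {1..min l (length es)}) \<and>
    (\<forall>j < length es. \<forall>j' < length es. j \<noteq> j' \<and> x (2 * n + j) = x (2 * n + j') \<longrightarrow>
       \<not> crosses (vertex_pos x) (es ! j) (es ! j'))"
  using fm_holds_no_monochromatic_crossing_fm[OF assms]
  by (auto simp: thickness_fm_def fm_holds_distinct_vertices_fm fm_holds_edge_colours_fm)

lemma thickness_fm_imp_layer_drawing:
  assumes G: "simple_graph n (set es)" and "distinct es" and "fm_holds x (thickness_fm n l es)"
  shows "\<exists>col. geometric_layer_drawing n (set es) l (vertex_pos x) col"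
proof -
  let ?m = "length es"
  note h = assms(3)[unfolded fm_holds_thickness_fm[OF G assms(2)]]
  define col where "col e = nat \<lfloor>x (2 * n + the_inv_into {..<?m} ((!) es) e)\<rfloor>" for e
  have "inj_on ((!) es) {..<?m}" using assms(2) by (simp add: inj_on_nth)
  then have col_nth: "col (es ! k) = nat \<lfloor>x (2 * n + k)\<rfloor>" if "k < ?m" for k
    using that by (simp add: col_def the_inv_into_f_f)
  have colour: "\<exists>c \<in> {1..min l ?m}. x (2 * n + k) = real c \<and> col (es ! k) = c" if "k < ?m" for k
    using h that col_nth by force
  have "geometric_layer_drawing n (set es) l (vertex_pos x) col"
    unfolding geometric_layer_drawing_def straight_line_drawing_def
  proof (intro conjI ballI impI)
    show "inj_on (vertex_pos x) {..<n}" using h by blast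
  next
    fix e assume "e \<in> set es"
    then obtain k where "k < ?m" "e = es ! k" by (auto simp: in_set_conv_nth)
    then show "col e \<in> {1..l}" using colour by fastforce
  next
    fix e f assume "e \<in> set es" "f \<in> set es" and same: "col e = col f"
    then obtain k k' where k: "k < ?m" "e = es ! k" and k': "k' < ?m" "f = es ! k'"
      by (auto simp: in_set_conv_nth)
    show "\<not> crosses (vertex_pos x) e f"
    proof (cases "k = k'")
      case True
      then show ?thesis using k k' by (simp add: crosses_def)
    next
      case False
      have "x (2 * n + k) = x (2 * n + k')" using colour[OF k(1)] colour[OF k'(1)] same k k' by auto
      then show ?thesis using h k k' False by blast
    qed
  qed
  then show ?thesis by blast
qed

lemma layer_drawing_imp_thickness_fm:
  assumes G: "simple_graph n (set es)" and "distinct es"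
    and drawing: "geometric_layer_drawing n (set es) l p col"
  shows "\<exists>x. fm_holds x (thickness_fm n l es) \<and> (\<forall>i<n. p i = vertex_pos x i)"
proof -
  let ?m = "length es"
  \<comment> \<open>With at least as many colours as edges, \<open>col\<close> may use colours above \<open>?m\<close>, so every
    edge gets a colour of its own instead.\<close>
  define x where "x j =
    (if j < 2 * n then (if even j then fst (p (j div 2)) else snd (p (j div 2)))
     else if ?m \<le> l then real (j - 2 * n + 1) else real (col (es ! (j - 2 * n))))" for j
  have pos: "\<forall>i<n. p i = vertex_pos x i" by (simp add: x_def vertex_pos_def)
  have D: "geometric_layer_drawing n (set es) l (vertex_pos x) col"
    using drawing geometric_layer_drawing_cong[OF G pos] by simp
  have colour: "x (2 * n + k) = (if ?m \<le> l then real (k + 1) else real (col (es ! k)))" for k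
    by (simp add: x_def)
  have "fm_holds x (thickness_fm n l es)"
    unfolding fm_holds_thickness_fm[OF G assms(2)]
  proof (intro conjI allI impI)
    show "inj_on (vertex_pos x) {..<n}"
      using D by (simp add: geometric_layer_drawing_def straight_line_drawing_def)
  next
    fix k assume "k < ?m"
    show "x (2 * n + k) \<in> real ` {1..min l ?m}"
    proof (cases "?m \<le> l")
      case True
      then show ?thesis using \<open>k < ?m\<close> unfolding colour by (auto intro: image_eqI[of _ _ "k + 1"])
    next
      case False
      then show ?thesis using D \<open>k < ?m\<close> unfolding colour geometric_layer_drawing_def by auto
    qed
  next
    fix k k' assume "k < ?m" "k' < ?m" and "k \<noteq> k' \<and> x (2 * n + k) = x (2 * n + k')"
    then show "\<not> crosses (vertex_pos x) (es ! k) (es ! k')"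
      using D unfolding colour geometric_layer_drawing_def by (auto split: if_splits)
  qed
  then show ?thesis using pos by blast
qed

lemma thickness_fm_vars:
  assumes G: "simple_graph n (set es)" and "distinct es"
  shows "fm_vars (thickness_fm n l es) \<subseteq> {..<2 * n + length es}"
proof -
  have "fm_vars (crossing_fm (es ! j) (es ! j')) \<subseteq> {..<2 * n}"
    if "j < length es" "j' < length es" "j \<noteq> j'" for j j'
    using crossing_fm_size(1)[OF G] that assms(2) by (simp add: nth_eq_iff_index_eq)
  then show ?thesis
    by (fastforce simp: thickness_fm_def distinct_vertices_fm_def edge_colours_fm_def
        colour_in_range_fm_def no_monochromatic_crossing_fm_def mp_x_def mp_y_def mp_var_def
        mp_const_def mpoly_vars_def)
qed

lemma thickness_fm_degree:
  assumes G: "simple_graph n (set es)" and "distinct es"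
  shows "fm_degree (thickness_fm n l es) \<le> 4"
proof -
  have "fm_degree (crossing_fm (es ! j) (es ! j')) \<le> 4"
    if "j < length es" "j' < length es" "j \<noteq> j'" for j j'
    using crossing_fm_size(2)[OF G] that assms(2) by (simp add: nth_eq_iff_index_eq)
  then show ?thesis
    unfolding thickness_fm_def distinct_vertices_fm_def edge_colours_fm_def colour_in_range_fm_def
      no_monochromatic_crossing_fm_def
    by (auto intro!: fm_degree_conj_le fm_degree_disj_le
        simp: mp_x_def mp_y_def mp_var_def mp_const_def mpoly_degree_def)
qed

lemma fm_atoms_distinct_vertices_fm: "fm_atoms (distinct_vertices_fm n) \<le> 1 + 2 * n\<^sup>2"
proof -
  have "fm_atoms (distinct_vertices_fm n) \<le> 1 + length (off_diagonal n) * 2"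
    unfolding distinct_vertices_fm_def by (rule order_trans[OF fm_atoms_conj_le[of _ 2]]) auto
  then show ?thesis using length_off_diagonal_le[of n] by linarith
qed

lemma fm_atoms_edge_colours_fm: "fm_atoms (edge_colours_fm n m k) \<le> 1 + m * (1 + k)"
proof -
  have colour: "fm_atoms (colour_in_range_fm v k) \<le> 1 + k" for v
    unfolding colour_in_range_fm_def by (rule order_trans[OF fm_atoms_disj_le[of _ 1]]) auto
  show ?thesis
    unfolding edge_colours_fm_def by (rule order_trans[OF fm_atoms_conj_le[of _ "1 + k"]]) (use colour in auto)
qed

lemma fm_atoms_no_monochromatic_crossing_fm:
  assumes G: "simple_graph n (set es)" and "distinct es"
  shows "fm_atoms (no_monochromatic_crossing_fm n es) \<le> 1 + 12 * (length es)\<^sup>2"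
proof -
  have "fm_atoms (crossing_fm (es ! j) (es ! j')) \<le> 11"
    if "j < length es" "j' < length es" "j \<noteq> j'" for j j'
    using crossing_fm_size(3)[OF G] that assms(2) by (simp add: nth_eq_iff_index_eq)
  then have "fm_atoms (no_monochromatic_crossing_fm n es) \<le> 1 + length (off_diagonal (length es)) * 12"
    unfolding no_monochromatic_crossing_fm_def
    by (intro order_trans[OF fm_atoms_conj_le[of _ 12]]) fastforce+
  then show ?thesis using length_off_diagonal_le[of "length es"] by linarith
qed

lemma thickness_fm_atoms:
  assumes G: "simple_graph n (set es)" and "distinct es"
  shows "fm_atoms (thickness_fm n l es) \<le> 16 * (n ^ 4 + 1)"
proof -
  let ?m = "length es"
  have m: "?m \<le> n\<^sup>2" using card_simple_graph_le[OF G] distinct_card[OF assms(2)] by simp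
  have m2: "?m\<^sup>2 \<le> n ^ 4" using power_mono[OF m, of 2] by (simp add: power_mult[symmetric])
  have n2: "n\<^sup>2 \<le> n ^ 4" by (cases "n = 0") (simp_all add: power_increasing)
  have "?m * (1 + min l ?m) \<le> ?m + ?m\<^sup>2"
    by (simp add: power2_eq_square algebra_simps)
  then have "fm_atoms (thickness_fm n l es) \<le> 3 + 2 * n\<^sup>2 + (?m + ?m\<^sup>2) + 12 * ?m\<^sup>2"
    using fm_atoms_distinct_vertices_fm[of n] fm_atoms_edge_colours_fm[of n ?m "min l ?m"]
      fm_atoms_no_monochromatic_crossing_fm[OF assms]
    by (simp add: thickness_fm_def)
  moreover have "?m \<le> n ^ 4" using m n2 by linarith
  ultimately show ?thesis using m2 n2 by (simp add: algebra_simps)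
qed

lemma geometric_thickness_etr_encoding:
  assumes "simple_graph n E"
  shows "\<exists>\<phi>. fm_vars \<phi> \<subseteq> {..<2 * n + card E}
         \<and> fm_degree \<phi> \<le> 6
         \<and> fm_atoms \<phi> \<le> 16 * (n ^ 4 + 1)
         \<and> (etr_true \<phi> \<longleftrightarrow> geometric_thickness_yes n E l)
         \<and> (\<forall>x. fm_holds x \<phi> \<longrightarrow>
               (\<exists>col. geometric_layer_drawing n E l (\<lambda>i. (x (2 * i), x (2 * i + 1))) col))
         \<and> (\<forall>p col. geometric_layer_drawing n E l p col \<longrightarrow>
               (\<exists>x. fm_holds x \<phi> \<and> (\<forall>i<n. p i = (x (2 * i), x (2 * i + 1)))))"
proof -
  obtain es where es: "distinct es" and E: "E = set es"
    using finite_distinct_list[OF simple_graph_finite[OF assms]] by blast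
  have G: "simple_graph n (set es)" using assms E by simp
  let ?\<phi> = "thickness_fm n l es"
  have sound: "\<exists>col. geometric_layer_drawing n E l (\<lambda>i. (x (2 * i), x (2 * i + 1))) col"
    if "fm_holds x ?\<phi>" for x
    using thickness_fm_imp_layer_drawing[OF G es that] unfolding E vertex_pos_def .
  have complete: "\<exists>x. fm_holds x ?\<phi> \<and> (\<forall>i<n. p i = (x (2 * i), x (2 * i + 1)))"
    if "geometric_layer_drawing n E l p col" for p col
    using layer_drawing_imp_thickness_fm[OF G es] that unfolding E vertex_pos_def by blast
  show ?thesis
  proof (intro exI[of _ ?\<phi>] conjI allI impI sound)
    show "fm_vars ?\<phi> \<subseteq> {..<2 * n + card E}"
      using thickness_fm_vars[OF G es] es E by (simp add: distinct_card)
    show "fm_degree ?\<phi> \<le> 6" using thickness_fm_degree[OF G es, of l] by linarith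
    show "fm_atoms ?\<phi> \<le> 16 * (n ^ 4 + 1)" by (rule thickness_fm_atoms[OF G es])
    show "etr_true ?\<phi> \<longleftrightarrow> geometric_thickness_yes n E l"
      unfolding etr_true_def geometric_thickness_yes_def using sound complete by blast
  qed (assumption | rule complete)+
qed

theorem mainTheorem8:
  "\<exists>C::nat. \<forall>(n::nat) (E::nat set set) (l::nat). simple_graph n E \<longrightarrow>
     (\<exists>\<phi>. fm_vars \<phi> \<subseteq> {..<2 * n + card E}
         \<and> fm_degree \<phi> \<le> 6
         \<and> fm_atoms \<phi> \<le> C * (n ^ 4 + 1)
         \<and> (etr_true \<phi> \<longleftrightarrow> geometric_thickness_yes n E l)
         \<and> (\<forall>x. fm_holds x \<phi> \<longrightarrow>
               (\<exists>col. geometric_layer_drawing n E l (\<lambda>i. (x (2 * i), x (2 * i + 1))) col))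
         \<and> (\<forall>p col. geometric_layer_drawing n E l p col \<longrightarrow>
               (\<exists>x. fm_holds x \<phi> \<and> (\<forall>i<n. p i = (x (2 * i), x (2 * i + 1))))))"
  using geometric_thickness_etr_encoding by blast

end
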